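(* Let $g_1:\mathbb{R}^d\to[0,\infty)$ be differentiable almost everywhere, let $U$ be a $d\times d$ orthogonal matrix, and define $g_2(\bm z)=g_1(U\bm z)$. Assume that for each of $g_1,g_2$ the optimal drift equation $\nabla g(\bm z)/g(\bm z)=\bm z$ has a unique solution. Let $g_1^{\mathrm I},g_2^{\mathrm I}$ be the integrands obtained by applying optimal drift importance sampling to $g_1,g_2$. Then there is an orthogonal matrix $V$ with $g_2^{\mathrm I}(\bm z)=g_1^{\mathrm I}(V\bm z)$ for all $\bm z$; consequently $g_1$ and $g_2$ have the same IS-active subspaces, and their analytic expressions in the $d$-dimensional IS-active subspace coincide: $g_1^{\mathrm{IA}}(\bm z)=g_2^{\mathrm{IA}}(\bm z)$.
   Context: Optimal drift importance sampling: for a nonnegative $g$, the optimal drift $\bm\mu^*$ is the (assumed unique) solution of $\nabla g(\bm z)/g(\bm z)=\bm z$, and the IS integrand is $g^{\mathrm I}(\bm z)=g(\bm z+\bm\mu^* )\exp\!\big(-{\bm\mu^*}^T\bm z-\tfrac12{\bm\mu^*}^T\bm\mu^*\big)$, so that $\mathbb{E}g(\bm Z)=\mathbb{E}g^{\mathrm I}(\bm Z)$ for $\bm Z\sim N(\bm 0,I_d)$. For an a.e. differentiable $h$, the gradient information matrix is $C=\mathbb{E}\big(\nabla h(\bm Z)\nabla h(\bm Z)^T\big)=Q\Lambda Q^T$ (eigendecomposition, $Q$ orthogonal, eigenvalues descending); the $r$-dimensional active subspace of $h$ is spanned by the first $r$ columns of $Q$. The IS-active subspaces of $g$ are the active subspaces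 of $g^{\mathrm I}$, and $g^{\mathrm{IA}}(\bm z):=g^{\mathrm I}(Q\bm z)$ with $Q$ the eigenvector matrix of the gradient information matrix of $g^{\mathrm I}$. Two functions related by $h_2(\bm z)=h_1(V\bm z)$, $V$ orthogonal, are said to have the same active subspaces when, identifying their coordinates as coordinates of the same vector in orthonormal bases related by $V$, the $r$-dimensional active subspaces coincide for every $r$, with eigenvector matrices chosen correspondingly ($Q_2=V^TQ_1$) in case of repeated eigenvalues. It is assumed the relevant gradient information matrices are finite. *)

theory Defs
  imports "HOL-Analysis.Analysis"
begin

text \<open>Vectors in R^d are elements of real^'n, where the index type 'n is finite and
  well-ordered (the order fixes "first r columns" and "descending eigenvalues").\<close>

definition grad :: "(real^'n::finite \<Rightarrow> real) \<Rightarrow> real^'n \<Rightarrow> real^'n" where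
  "grad h z = (\<chi> i. frechet_derivative h (at z) (axis i 1))"

definition std_gauss :: "(real^'n::finite) measure" where
  "std_gauss = density lborel
     (\<lambda>z. ennreal ((2 * pi) powr (- real CARD('n) / 2) * exp (- (norm z)\<^sup>2 / 2)))"

definition opt_drift_eq :: "(real^'n::finite \<Rightarrow> real) \<Rightarrow> real^'n \<Rightarrow> bool" where
  "opt_drift_eq g z \<longleftrightarrow> g differentiable (at z) \<and> g z \<noteq> 0 \<and> (1 / g z) *\<^sub>R grad g z = z"

definition mu_star :: "(real^'n::finite \<Rightarrow> real) \<Rightarrow> real^'n" where
  "mu_star g = (THE z. opt_drift_eq g z)"

definition gI :: "(real^'n::finite \<Rightarrow> real) \<Rightarrow> real^'n \<Rightarrow> real" where
  "gI g z = g (z + mu_star g) * exp (- (mu_star g \<bullet> z) - (1/2) * (mu_star g \<bullet> mu_star g))"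

definition grad_info :: "(real^'n::finite \<Rightarrow> real) \<Rightarrow> real^'n^'n" where
  "grad_info h = (\<chi> i j. \<integral> z. grad h z $ i * grad h z $ j \<partial>std_gauss)"

definition eig_decomp :: "real^'n::{finite,wellorder}^'n::{finite,wellorder} \<Rightarrow> real^'n::{finite,wellorder}^'n::{finite,wellorder} \<Rightarrow> real^'n::{finite,wellorder}^'n::{finite,wellorder} \<Rightarrow> bool" where
  "eig_decomp C Q Lam \<longleftrightarrow> orthogonal_matrix Q
     \<and> (\<forall>i j. i \<noteq> j \<longrightarrow> Lam $ i $ j = 0)
     \<and> (\<forall>i j. i \<le> j \<longrightarrow> Lam $ j $ j \<le> Lam $ i $ i)
     \<and> C = Q ** Lam ** transpose Q"

text \<open>r-dimensional active subspace: span of the first r columns of Q.\<close>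
definition active_subspace :: "real^'n::{finite,wellorder}^'n::{finite,wellorder} \<Rightarrow> nat \<Rightarrow> (real^'n::{finite,wellorder}) set" where
  "active_subspace Q r = span {column i Q | i. card {k. k < i} < r}"

definition gIA :: "(real^'n::finite \<Rightarrow> real) \<Rightarrow> real^'n^'n \<Rightarrow> real^'n \<Rightarrow> real" where
  "gIA g Q z = gI g (Q *v z)"

end

theory Submission
  imports Defs
begin

text \<open>Rotating \<open>g\<close> by an orthogonal \<open>U\<close> rotates its optimal drift by \<open>U\<^sup>T\<close>, because the drift
  equation \<open>\<nabla>g / g = z\<close> is equivariant under orthogonal changes of variables; hence
  \<open>g\<^sub>2\<^sup>I = g\<^sub>1\<^sup>I \<circ> U\<close> and one may take \<open>V = U\<close>. As the standard Gaussian is rotation invariant, the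
  gradient information matrix of \<open>g\<^sub>2\<^sup>I\<close> is \<open>U\<^sup>T C U\<close>, so \<open>U\<^sup>T Q\<close> diagonalises it with the same
  eigenvalues, and active subspaces and \<open>g\<^sup>I\<^sup>A\<close> correspond under \<open>U\<close>. The one technical point is
  that the gradient of an arbitrary function is Borel measurable, which is needed to change
  variables in the Gaussian integrals.\<close>

lemma grad_has_derivative:
  fixes h :: "real^'n \<Rightarrow> real"
  assumes "h differentiable (at z)"
  shows "(h has_derivative (\<lambda>v. grad h z \<bullet> v)) (at z)"
proof -
  let ?f = "frechet_derivative h (at z)"
  have der: "(h has_derivative ?f) (at z)"
    using assms frechet_derivative_works by blast
  have "?f v = grad h z \<bullet> v" for v
  proof -
    have "?f v = ?f (\<Sum>i\<in>UNIV. v $ i *s axis i 1)"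
      by (simp add: basis_expansion)
    also have "\<dots> = (\<Sum>i\<in>UNIV. v $ i * ?f (axis i 1))"
      using has_derivative_linear[OF der]
      by (simp add: linear_sum linear_scale scalar_mult_eq_scaleR)
    finally show ?thesis
      by (simp add: grad_def inner_vec_def mult.commute)
  qed
  with der show ?thesis
    by (metis (no_types, lifting) ext)
qed

lemma grad_eqI:
  fixes h :: "real^'n \<Rightarrow> real"
  assumes "(h has_derivative (\<lambda>v. a \<bullet> v)) (at z)"
  shows "grad h z = a"
  by (simp add: grad_def vec_eq_iff inner_axis flip: frechet_derivative_at[OF assms])

lemma grad_eq_if_not_differentiable:
  assumes "\<not> h differentiable (at z)" and "\<not> h differentiable (at z')"
  shows "grad h z = grad h z'"
proof -
  have "\<not> (h has_derivative f') (at x)" if "\<not> h differentiable (at x)" for f' x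
    using that unfolding differentiable_def by blast
  then show ?thesis
    using assms by (simp add: grad_def frechet_derivative_def)
qed

section \<open>Borel measurability of the gradient\<close>

text \<open>Comparing \<open>h\<close> at two arbitrary points \<open>y, y'\<close> near \<open>z\<close>, rather than at \<open>y\<close> and \<open>z\<close>,
  makes this set closed even when \<open>h\<close> is not measurable.\<close>

definition approx_grad_set :: "(real^'n \<Rightarrow> real) \<Rightarrow> real \<Rightarrow> real \<Rightarrow> real^'n \<Rightarrow> (real^'n) set" where
  "approx_grad_set h e d a = {z. \<forall>y y'. dist y z < d \<and> dist y' z < d \<longrightarrow>
      \<bar>h y - h y' - a \<bullet> (y - y')\<bar> \<le> e * (dist y z + dist y' z)}"

lemma closed_approx_grad_set:
  fixes h :: "real^'n \<Rightarrow> real"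
  shows "closed (approx_grad_set h e d a)"
  unfolding approx_grad_set_def
proof (intro closed_Collect_all closed_Collect_imp)
  fix y y' :: "real^'n"
  show "open {z. dist y z < d \<and> dist y' z < d}"
    by (intro open_Collect_conj open_Collect_less continuous_intros)
  show "closed {z. \<bar>h y - h y' - a \<bullet> (y - y')\<bar> \<le> e * (dist y z + dist y' z)}"
    by (intro closed_Collect_le continuous_intros)
qed

lemma approx_grad_set_antimono:
  "d' \<le> d \<Longrightarrow> approx_grad_set h e d a \<subseteq> approx_grad_set h e d' a"
  unfolding approx_grad_set_def by force

lemma approx_grad_setD:
  assumes "z \<in> approx_grad_set h e d a" and "norm (y - z) < d"
  shows "\<bar>h y - h z - a \<bullet> (y - z)\<bar> \<le> e * norm (y - z)"
proof -
  have "0 < d"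
    using assms(2) norm_ge_zero[of "y - z"] by linarith
  then have "dist y z < d" "dist z z < d"
    using assms(2) by (simp_all add: dist_norm)
  with assms(1) have "\<bar>h y - h z - a \<bullet> (y - z)\<bar> \<le> e * (dist y z + dist z z)"
    unfolding approx_grad_set_def by blast
  then show ?thesis
    by (simp add: dist_norm)
qed

lemma has_derivative_imp_approx_grad_set:
  fixes h :: "real^'n \<Rightarrow> real"
  assumes der: "(h has_derivative (\<lambda>v. G \<bullet> v)) (at z)"
    and e: "e > 0" and aG: "norm (G - a) < e / 2"
  shows "\<exists>d>0. z \<in> approx_grad_set h e d a"
proof -
  obtain d where "d > 0" and d:
    "\<And>y. norm (y - z) < d \<Longrightarrow> \<bar>h y - h z - G \<bullet> (y - z)\<bar> \<le> e/2 * norm (y - z)"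
    using der e unfolding has_derivative_at_alt by (metis half_gt_zero real_norm_def)
  have "z \<in> approx_grad_set h e d a"
    unfolding approx_grad_set_def
  proof (intro CollectI allI impI)
    fix y y' :: "real^'n"
    assume "dist y z < d \<and> dist y' z < d"
    then have A: "\<bar>h y - h z - G \<bullet> (y - z)\<bar> \<le> e/2 * norm (y - z)"
      and B: "\<bar>h y' - h z - G \<bullet> (y' - z)\<bar> \<le> e/2 * norm (y' - z)"
      using d by (auto simp: dist_norm)
    have "\<bar>(G - a) \<bullet> (y - y')\<bar> \<le> norm (G - a) * norm (y - y')"
      by (rule Cauchy_Schwarz_ineq2)
    also have "\<dots> \<le> e/2 * (norm (y - z) + norm (y' - z))"
      using aG e norm_triangle_ineq4[of "y - z" "y' - z"]
      by (intro mult_mono) auto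
    finally have C: "\<bar>(G - a) \<bullet> (y - y')\<bar> \<le> e/2 * (norm (y - z) + norm (y' - z))" .
    have "h y - h y' - a \<bullet> (y - y')
        = (h y - h z - G \<bullet> (y - z)) - (h y' - h z - G \<bullet> (y' - z)) + (G - a) \<bullet> (y - y')"
      by (simp add: inner_diff_left inner_diff_right algebra_simps)
    then have "\<bar>h y - h y' - a \<bullet> (y - y')\<bar>
        \<le> e/2 * norm (y - z) + e/2 * norm (y' - z) + e/2 * (norm (y - z) + norm (y' - z))"
      using A B C by linarith
    then show "\<bar>h y - h y' - a \<bullet> (y - y')\<bar> \<le> e * (dist y z + dist y' z)"
      by (simp add: dist_norm algebra_simps)
  qed
  with \<open>d > 0\<close> show ?thesis by blast
qed

lemma approx_grad_set_norm_diff_le: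
  fixes h :: "real^'n \<Rightarrow> real"
  assumes "z \<in> approx_grad_set h e d a" "z \<in> approx_grad_set h e' d' a'"
    and "d > 0" "d' > 0" "e \<ge> 0" "e' \<ge> 0"
  shows "norm (a - a') \<le> e + e'"
proof (cases "a = a'")
  case False
  define w where "w = a - a'"
  define t where "t = min d d' / 2"
  define y where "y = z + (t / norm w) *\<^sub>R w"
  have "t > 0" "norm w > 0"
    using assms False by (auto simp: t_def w_def)
  then have ny: "norm (y - z) = t" and "t < d" "t < d'"
    using assms by (auto simp: y_def t_def)
  have "t * norm w = w \<bullet> (y - z)"
    using \<open>norm w > 0\<close> by (simp add: y_def power2_norm_eq_inner[symmetric] power2_eq_square)
  also have "\<dots> = (h y - h z - a' \<bullet> (y - z)) - (h y - h z - a \<bullet> (y - z))"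
    by (simp add: w_def inner_diff_left)
  also have "\<dots> \<le> t * (e + e')"
    using approx_grad_setD[OF assms(1), of y] approx_grad_setD[OF assms(2), of y]
      \<open>t < d\<close> \<open>t < d'\<close> unfolding ny by (simp add: algebra_simps)
  finally show ?thesis
    using \<open>t > 0\<close> by (simp add: w_def)
qed (use assms in simp)

lemma approx_grad_sets_has_derivative:
  fixes h :: "real^'n \<Rightarrow> real"
  assumes S: "\<And>n. z \<in> approx_grad_set h (e n) (\<delta> n) (A n)"
    and \<delta>: "\<And>n. \<delta> n > 0" and e: "\<And>n. e n \<ge> 0" "e \<longlonglongrightarrow> 0"
  shows "\<exists>G. A \<longlonglongrightarrow> G \<and> (h has_derivative (\<lambda>v. G \<bullet> v)) (at z)"
proof -
  have AA: "dist (A m) (A n) \<le> e m + e n" for m n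
    using approx_grad_set_norm_diff_le[OF S S \<delta> \<delta> e(1) e(1)] by (simp add: dist_norm)
  have "Cauchy A"
  proof (rule metric_CauchyI)
    fix r :: real assume "r > 0"
    then obtain N where N: "\<And>n. n \<ge> N \<Longrightarrow> e n < r / 2"
      using order_tendstoD(2)[OF e(2), of "r / 2"] by (auto simp: eventually_sequentially)
    have "\<forall>m\<ge>N. \<forall>n\<ge>N. dist (A m) (A n) < r"
    proof (intro allI impI)
      fix m n assume "m \<ge> N" "n \<ge> N"
      then show "dist (A m) (A n) < r"
        using AA[of m n] N[of m] N[of n] by linarith
    qed
    then show "\<exists>N. \<forall>m\<ge>N. \<forall>n\<ge>N. dist (A m) (A n) < r" by blast
  qed
  then obtain G where AG: "A \<longlonglongrightarrow> G"
    using Cauchy_convergent_iff convergent_def by blast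
  have bound: "norm (A n - G) \<le> e n" for n
  proof (rule LIMSEQ_le)
    show "(\<lambda>k. dist (A n) (A k)) \<longlonglongrightarrow> norm (A n - G)"
      using AG by (auto intro!: tendsto_intros simp: dist_norm)
    show "(\<lambda>k. e n + e k) \<longlonglongrightarrow> e n"
      using tendsto_add[OF tendsto_const e(2)] by simp
  qed (use AA in auto)
  have "(h has_derivative (\<lambda>v. G \<bullet> v)) (at z)"
    unfolding has_derivative_at_alt
  proof (intro conjI allI impI bounded_linear_inner_right)
    fix r :: real assume "r > 0"
    then obtain n where n: "e n < r / 2"
      using order_tendstoD(2)[OF e(2), of "r / 2"] by (auto simp: eventually_sequentially)
    have "\<bar>h y - h z - G \<bullet> (y - z)\<bar> \<le> r * norm (y - z)" if y: "norm (y - z) < \<delta> n" for y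
    proof -
      have "\<bar>(A n - G) \<bullet> (y - z)\<bar> \<le> e n * norm (y - z)"
        using Cauchy_Schwarz_ineq2[of "A n - G" "y - z"] bound[of n]
        by (meson mult_right_mono norm_ge_zero order_trans)
      moreover have "h y - h z - G \<bullet> (y - z) = (h y - h z - A n \<bullet> (y - z)) + (A n - G) \<bullet> (y - z)"
        by (simp add: inner_diff_left)
      ultimately have "\<bar>h y - h z - G \<bullet> (y - z)\<bar> \<le> 2 * e n * norm (y - z)"
        using approx_grad_setD[OF S y] by linarith
      also have "\<dots> \<le> r * norm (y - z)"
        using n by (intro mult_right_mono) auto
      finally show ?thesis .
    qed
    then show "\<exists>d>0. \<forall>y. norm (y - z) < d \<longrightarrow> norm (h y - h z - G \<bullet> (y - z)) \<le> r * norm (y - z)"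
      using \<delta> by auto
  qed
  with AG show ?thesis by blast
qed

lemma grad_le_iff_approx_grad_sets:
  fixes h :: "real^'n \<Rightarrow> real"
  assumes "closure D = UNIV"
  shows "h differentiable (at z) \<and> grad h z $ i \<le> b \<longleftrightarrow>
    (\<forall>n::nat. \<exists>m::nat. \<exists>a\<in>D. a $ i \<le> b + 1 / Suc n
       \<and> z \<in> approx_grad_set h (1 / Suc n) (1 / Suc m) a)"
    (is "?lhs \<longleftrightarrow> (\<forall>n. ?R n)")
proof
  assume ?lhs
  then have der: "(h has_derivative (\<lambda>v. grad h z \<bullet> v)) (at z)" and le: "grad h z $ i \<le> b"
    using grad_has_derivative by auto
  show "\<forall>n. ?R n"
  proof
    fix n :: nat
    define e where "e = 1 / real (Suc n)"
    have "e > 0" by (simp add: e_def)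
    then have "\<exists>a\<in>D. dist a (grad h z) < e / 2"
      using \<open>closure D = UNIV\<close> closure_approachable by (metis UNIV_I half_gt_zero)
    then obtain a where "a \<in> D" and aG: "norm (grad h z - a) < e / 2"
      by (auto simp: dist_norm norm_minus_commute)
    obtain d where "d > 0" and zd: "z \<in> approx_grad_set h e d a"
      using has_derivative_imp_approx_grad_set[OF der \<open>e > 0\<close> aG] by blast
    obtain m :: nat where "1 / real (Suc m) < d"
      using \<open>d > 0\<close> nat_approx_posE by blast
    then have "z \<in> approx_grad_set h e (1 / Suc m) a"
      using zd approx_grad_set_antimono by (metis less_eq_real_def subsetD)
    moreover have "a $ i \<le> b + e"
      using component_le_norm_cart[of "grad h z - a" i] aG le by simp
    ultimately show "?R n"
      using \<open>a \<in> D\<close> unfolding e_def by blast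
  qed
next
  assume "\<forall>n. ?R n"
  then obtain M A where MA: "\<And>n. A n \<in> D \<and> A n $ i \<le> b + 1 / Suc n
      \<and> z \<in> approx_grad_set h (1 / Suc n) (1 / Suc (M n)) (A n)"
    by metis
  have e: "(\<lambda>n. 1 / real (Suc n)) \<longlonglongrightarrow> 0"
    using LIMSEQ_inverse_real_of_nat by (simp add: inverse_eq_divide)
  have "\<exists>G. A \<longlonglongrightarrow> G \<and> (h has_derivative (\<lambda>v. G \<bullet> v)) (at z)"
    by (rule approx_grad_sets_has_derivative[OF _ _ _ e]) (use MA in auto)
  then obtain G where AG: "A \<longlonglongrightarrow> G" and der: "(h has_derivative (\<lambda>v. G \<bullet> v)) (at z)"
    by blast
  have "G $ i \<le> b"
  proof (rule LIMSEQ_le)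
    show "(\<lambda>n. A n $ i) \<longlonglongrightarrow> G $ i" using AG by (rule tendsto_vec_nth)
    show "(\<lambda>n. b + 1 / real (Suc n)) \<longlonglongrightarrow> b"
      using tendsto_add[OF tendsto_const e] by simp
  qed (use MA in auto)
  then show ?lhs
    using der grad_eqI[OF der] differentiableI by blast
qed

lemma sets_borel_differentiable_grad_le:
  fixes h :: "real^'n \<Rightarrow> real"
  shows "{z. h differentiable (at z) \<and> grad h z $ i \<le> b} \<in> sets borel"
proof -
  obtain D :: "(real^'n) set" where "countable D" and "D \<subseteq> UNIV" and "UNIV \<subseteq> closure D"
    by (rule separable)
  then have "closure D = UNIV"
    by auto
  have "{z. h differentiable (at z) \<and> grad h z $ i \<le> b} = (\<Inter>n::nat. \<Union>m::nat.
      \<Union>a\<in>{a\<in>D. a $ i \<le> b + 1 / Suc n}. approx_grad_set h (1 / Suc n) (1 / Suc m) a)"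
    (is "?S = ?T")
  proof (rule set_eqI)
    fix z
    have "z \<in> ?T \<longleftrightarrow> (\<forall>n::nat. \<exists>m::nat. \<exists>a\<in>D. a $ i \<le> b + 1 / Suc n
        \<and> z \<in> approx_grad_set h (1 / Suc n) (1 / Suc m) a)"
      by blast
    then show "z \<in> ?S \<longleftrightarrow> z \<in> ?T"
      using grad_le_iff_approx_grad_sets[OF \<open>closure D = UNIV\<close>, of h z i b]
      by (simp only: mem_Collect_eq)
  qed
  also have "?T \<in> sets borel"
    using \<open>countable D\<close>
    by (intro sets.countable_INT' sets.countable_UN' image_subsetI borel_closed closed_approx_grad_set)
      auto
  finally show ?thesis .
qed

lemma borel_measurable_grad [measurable]:
  fixes h :: "real^'n \<Rightarrow> real"
  shows "(\<lambda>z. grad h z $ i) \<in> borel_measurable borel"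
proof -
  let ?G = "\<lambda>b. {z. h differentiable (at z) \<and> grad h z $ i \<le> b}"
  define N where "N = {z. \<not> h differentiable (at z)}"
  have "h differentiable (at z) \<longleftrightarrow> (\<exists>k::nat. z \<in> ?G (real k))" for z
    using real_arch_simple by blast
  then have "N = UNIV - (\<Union>k::nat. ?G (real k))"
    unfolding N_def by blast
  moreover have "?G (real k) \<in> sets borel" for k
    by (rule sets_borel_differentiable_grad_le)
  ultimately have N_borel: "N \<in> sets borel"
    by auto
  have "{z \<in> N. grad h z $ i \<le> b} \<in> sets borel" for b
  proof (cases "\<exists>z\<^sub>0\<in>N. grad h z\<^sub>0 $ i \<le> b")
    case True
    then obtain z\<^sub>0 where "z\<^sub>0 \<in> N" "grad h z\<^sub>0 $ i \<le> b" by blast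
    then have "grad h z $ i \<le> b" if "z \<in> N" for z
      using that grad_eq_if_not_differentiable[of h z z\<^sub>0] unfolding N_def by simp
    then have "{z \<in> N. grad h z $ i \<le> b} = N"
      by blast
    then show ?thesis using N_borel by simp
  next
    case False
    then have "{z \<in> N. grad h z $ i \<le> b} = {}" by blast
    then show ?thesis by (simp only: sets.empty_sets)
  qed
  moreover have "{z. grad h z $ i \<le> b} = ?G b \<union> {z \<in> N. grad h z $ i \<le> b}" for b
    unfolding N_def by auto
  ultimately show ?thesis
    unfolding borel_measurable_iff_le using sets_borel_differentiable_grad_le[of h i] by auto
qed

section \<open>Orthogonal changes of variables\<close>

declare vector_transpose_matrix [simp del] transpose_matrix_vector [simp del]

lemma orthogonal_matrix_mv_transpose_cancel:
  fixes U :: "real^'n^'n"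
  assumes "orthogonal_matrix U"
  shows "U *v (transpose U *v z) = z"
  using assms by (simp add: matrix_vector_mul_assoc orthogonal_matrix_def)

lemma orthogonal_matrix_transpose_mv_cancel:
  fixes U :: "real^'n^'n"
  assumes "orthogonal_matrix U"
  shows "transpose U *v (U *v z) = z"
  using assms by (simp add: matrix_vector_mul_assoc orthogonal_matrix_def)

lemma orthogonal_transformation_mv:
  fixes U :: "real^'n^'n"
  shows "orthogonal_matrix U \<Longrightarrow> orthogonal_transformation (\<lambda>z. U *v z)"
  by (simp add: orthogonal_transformation_matrix matrix_vector_mul_linear)

lemma norm_orthogonal_matrix_mv:
  fixes U :: "real^'n^'n"
  shows "orthogonal_matrix U \<Longrightarrow> norm (U *v z) = norm z"
  using orthogonal_transformation_mv orthogonal_transformation_norm by blast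

lemma measurable_mv [measurable]: "(\<lambda>z. (U::real^'n^'m) *v z) \<in> borel \<rightarrow>\<^sub>M borel"
  by (intro borel_measurable_continuous_onI continuous_intros)

lemma lborel_distr_orthogonal_matrix:
  fixes U :: "real^'n::{finite,wellorder}^'n::{finite,wellorder}"
  assumes U: "orthogonal_matrix U"
  shows "distr lborel borel (\<lambda>z. U *v z) = lborel"
proof (rule lborel_eqI[symmetric])
  fix l u :: "real^'n::{finite,wellorder}"
  assume le: "\<And>b. b \<in> Basis \<Longrightarrow> l \<bullet> b \<le> u \<bullet> b"
  let ?B = "box l u" and ?T = "\<lambda>z. transpose U *v z"
  have ot: "orthogonal_transformation ?T"
    using U by (simp add: orthogonal_transformation_mv)
  have preimage: "(\<lambda>z. U *v z) -` ?B = ?T ` ?B"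
    using orthogonal_matrix_mv_transpose_cancel[OF U] orthogonal_matrix_transpose_mv_cancel[OF U]
    by (auto simp: image_iff) metis
  have "open (?T ` ?B)"
    using ot by (metis open_box orthogonal_transformation_surj orthogonal_transformation_linear
        open_surjective_linear_image)
  then have "emeasure lborel (?T ` ?B) = emeasure lebesgue (?T ` ?B)"
    by (simp add: borel_open main_part_sets)
  also have "\<dots> = measure lebesgue (?T ` ?B)"
    using measurable_orthogonal_image[OF ot] by (simp add: emeasure_eq_measure2)
  also have "\<dots> = measure lebesgue ?B"
    using measure_orthogonal_image[OF ot] by simp
  also have "\<dots> = emeasure lborel ?B"
    by (simp add: emeasure_eq_measure2 main_part_sets)
  finally show "emeasure (distr lborel borel (\<lambda>z. U *v z)) ?B = (\<Prod>b\<in>Basis. (u - l) \<bullet> b)"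
    using le by (simp add: emeasure_distr preimage emeasure_lborel_box_eq)
qed simp

lemma AE_lborel_orthogonal_matrix:
  fixes U :: "real^'n::{finite,wellorder}^'n::{finite,wellorder}"
  assumes "orthogonal_matrix U" and "AE z in lborel. P z"
  shows "AE z in lborel. P (U *v z)"
proof -
  have "AE z in distr lborel borel (\<lambda>z. U *v z). P z"
    using assms by (simp only: lborel_distr_orthogonal_matrix)
  then show ?thesis
    by (rule AE_distrD[rotated]) simp
qed

lemma sets_std_gauss [measurable_cong]: "sets (std_gauss :: (real^'n::finite) measure) = sets borel"
  by (simp add: std_gauss_def)

lemma AE_std_gauss_if_AE_lborel:
  assumes "AE z in lborel. P z"
  shows "AE z in (std_gauss :: (real^'n::finite) measure). P z"
  using assms unfolding std_gauss_def by (subst AE_density) (auto elim: AE_mp)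

lemma std_gauss_distr_orthogonal_matrix:
  fixes U :: "real^'n::{finite,wellorder}^'n::{finite,wellorder}"
  assumes U: "orthogonal_matrix U"
  shows "distr std_gauss borel (\<lambda>z. U *v z) = std_gauss"
proof -
  define \<phi> :: "real^'n::{finite,wellorder} \<Rightarrow> ennreal" where
    "\<phi> z = ennreal ((2 * pi) powr (- real CARD('n) / 2) * exp (- (norm z)\<^sup>2 / 2))" for z
  have std_gauss: "std_gauss = density lborel \<phi>"
    unfolding std_gauss_def \<phi>_def[abs_def] ..
  have Ut: "orthogonal_matrix (transpose U)"
    using U by simp
  have \<phi>_borel: "\<phi> \<in> borel_measurable borel"
    unfolding \<phi>_def by measurable
  have \<phi>_invariant: "\<phi> \<circ> (\<lambda>z. transpose U *v z) = \<phi>"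
    by (simp add: fun_eq_iff \<phi>_def norm_orthogonal_matrix_mv[OF Ut])
  have "distr (density (distr lborel borel (\<lambda>z. transpose U *v z)) \<phi>) lborel (\<lambda>z. U *v z)
      = density lborel (\<phi> \<circ> (\<lambda>z. transpose U *v z))"
    by (rule distr_density_distr) (auto simp: \<phi>_borel orthogonal_matrix_mv_transpose_cancel[OF U])
  then have "distr (density lborel \<phi>) borel (\<lambda>z. U *v z) = density lborel \<phi>"
    unfolding lborel_distr_orthogonal_matrix[OF Ut] \<phi>_invariant
    by (metis distr_cong sets_lborel)
  then show ?thesis
    by (simp only: std_gauss)
qed

lemma integral_std_gauss_orthogonal_matrix:
  fixes U :: "real^'n::{finite,wellorder}^'n::{finite,wellorder}"
    and F :: "real^'n::{finite,wellorder} \<Rightarrow> real"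
  assumes "orthogonal_matrix U" and "F \<in> borel_measurable borel"
  shows "(\<integral>z. F (U *v z) \<partial>std_gauss) = (\<integral>z. F z \<partial>std_gauss)"
proof -
  have "(\<integral>z. F (U *v z) \<partial>std_gauss) = (\<integral>z. F z \<partial>distr std_gauss borel (\<lambda>z. U *v z))"
    using assms(2) by (simp add: integral_distr)
  then show ?thesis
    by (simp only: std_gauss_distr_orthogonal_matrix[OF assms(1)])
qed

section \<open>Equivariance of the optimal drift and of the IS integrand\<close>

lemma has_derivative_compose_mv:
  fixes h :: "real^'n \<Rightarrow> real" and U :: "real^'m^'n"
  assumes "h differentiable (at (U *v z))"
  shows "((\<lambda>x. h (U *v x)) has_derivative (\<lambda>v. (transpose U *v grad h (U *v z)) \<bullet> v)) (at z)"
proof -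
  have "((\<lambda>x. U *v x) has_derivative (\<lambda>x. U *v x)) (at z)"
    by (intro bounded_linear_imp_has_derivative matrix_vector_mul_bounded_linear)
  from diff_chain_at[OF this grad_has_derivative[OF assms]] show ?thesis
    by (simp add: o_def dot_lmul_matrix[symmetric] transpose_matrix_vector)
qed

lemma grad_compose_mv:
  fixes h :: "real^'n \<Rightarrow> real" and U :: "real^'m^'n"
  assumes "h differentiable (at (U *v z))"
  shows "grad (\<lambda>x. h (U *v x)) z = transpose U *v grad h (U *v z)"
  using has_derivative_compose_mv[OF assms] by (rule grad_eqI)

lemma differentiable_compose_orthogonal_iff:
  fixes h :: "real^'n \<Rightarrow> real" and U :: "real^'n^'n"
  assumes U: "orthogonal_matrix U"
  shows "(\<lambda>x. h (U *v x)) differentiable (at z) \<longleftrightarrow> h differentiable (at (U *v z))"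
proof
  assume "(\<lambda>x. h (U *v x)) differentiable (at z)"
  then have "(\<lambda>w. h (U *v (transpose U *v w))) differentiable (at (U *v z))"
    using has_derivative_compose_mv[of "\<lambda>x. h (U *v x)" "transpose U" "U *v z"]
    by (auto simp: orthogonal_matrix_transpose_mv_cancel[OF U] intro: differentiableI)
  then show "h differentiable (at (U *v z))"
    by (simp add: orthogonal_matrix_mv_transpose_cancel[OF U])
qed (rule differentiableI[OF has_derivative_compose_mv])

lemma opt_drift_eq_compose_orthogonal_iff:
  fixes g :: "real^'n \<Rightarrow> real" and U :: "real^'n^'n"
  assumes U: "orthogonal_matrix U"
  shows "opt_drift_eq (\<lambda>x. g (U *v x)) z \<longleftrightarrow> opt_drift_eq g (U *v z)"
proof (cases "g differentiable (at (U *v z))")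
  case True
  have inv: "transpose U *v w = z \<longleftrightarrow> w = U *v z" for w
    using orthogonal_matrix_mv_transpose_cancel[OF U] orthogonal_matrix_transpose_mv_cancel[OF U]
    by metis
  show ?thesis
    unfolding opt_drift_eq_def grad_compose_mv[OF True] differentiable_compose_orthogonal_iff[OF U]
      matrix_vector_mult_scaleR[symmetric] inv by simp
qed (simp add: opt_drift_eq_def differentiable_compose_orthogonal_iff[OF U])

lemma mu_star_compose_orthogonal:
  fixes g :: "real^'n \<Rightarrow> real" and U :: "real^'n^'n"
  assumes U: "orthogonal_matrix U" and unique: "\<exists>!z. opt_drift_eq g z"
  shows "mu_star (\<lambda>x. g (U *v x)) = transpose U *v mu_star g"
proof -
  have char: "opt_drift_eq (\<lambda>x. g (U *v x)) z \<longleftrightarrow> z = transpose U *v mu_star g" for z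
  proof -
    have "opt_drift_eq g w \<longleftrightarrow> w = mu_star g" for w
      using unique theI'[OF unique] unfolding mu_star_def by blast
    then show ?thesis
      unfolding opt_drift_eq_compose_orthogonal_iff[OF U]
      by (metis orthogonal_matrix_mv_transpose_cancel[OF U] orthogonal_matrix_transpose_mv_cancel[OF U])
  qed
  show ?thesis
    unfolding mu_star_def[of "\<lambda>x. g (U *v x)"] using char by (intro the_equality) auto
qed

lemma gI_compose_orthogonal:
  fixes g :: "real^'n \<Rightarrow> real" and U :: "real^'n^'n"
  assumes U: "orthogonal_matrix U" and unique: "\<exists>!z. opt_drift_eq g z"
  shows "gI (\<lambda>x. g (U *v x)) = (\<lambda>z. gI g (U *v z))"
proof
  fix z
  let ?m = "mu_star g"
  have "U *v (z + transpose U *v ?m) = U *v z + ?m"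
    by (simp add: matrix_vector_right_distrib orthogonal_matrix_mv_transpose_cancel[OF U])
  moreover have "(transpose U *v ?m) \<bullet> z = ?m \<bullet> (U *v z)"
    by (simp add: dot_lmul_matrix[symmetric] transpose_matrix_vector)
  moreover have "(transpose U *v ?m) \<bullet> (transpose U *v ?m) = ?m \<bullet> ?m"
    using norm_orthogonal_matrix_mv[of "transpose U" ?m] U by (simp flip: power2_norm_eq_inner)
  ultimately show "gI (\<lambda>x. g (U *v x)) z = gI g (U *v z)"
    by (simp add: gI_def mu_star_compose_orthogonal[OF U unique])
qed

lemma AE_differentiable_gI:
  fixes g :: "real^'n \<Rightarrow> real"
  assumes "AE z in lborel. g differentiable (at z)"
  shows "AE z in lborel. gI g differentiable (at z)"
proof -
  let ?m = "mu_star g"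
  have "AE w in distr lborel borel ((+) ?m). g differentiable (at w)"
    using assms by (simp only: lborel_distr_plus)
  then have "AE z in lborel. g differentiable (at (?m + z))"
    by (rule AE_distrD[rotated]) simp
  then show ?thesis
  proof (rule AE_mp, intro AE_I2 impI)
    fix z assume "g differentiable (at (?m + z))"
    then have "(\<lambda>x. g (x + ?m)) differentiable (at z)"
      using differentiable_chain_at[of "\<lambda>x. x + ?m" z g]
      by (simp add: o_def add.commute)
    moreover have "(\<lambda>x. exp (- (?m \<bullet> x) - 1/2 * (?m \<bullet> ?m))) differentiable (at z)"
      by (intro differentiableI derivative_eq_intros) auto
    ultimately show "gI g differentiable (at z)"
      unfolding gI_def by (rule differentiable_mult)
  qed
qed

lemma integrable_grad_component_mult:
  fixes h :: "real^'n::finite \<Rightarrow> real"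
  assumes "integrable std_gauss (\<lambda>z. (norm (grad h z))\<^sup>2)"
  shows "integrable std_gauss (\<lambda>z. grad h z $ k * grad h z $ l)"
proof (rule Bochner_Integration.integrable_bound[OF assms])
  show "(\<lambda>z. grad h z $ k * grad h z $ l) \<in> borel_measurable std_gauss"
    by measurable
  have "\<bar>grad h z $ k\<bar> * \<bar>grad h z $ l\<bar> \<le> norm (grad h z) * norm (grad h z)" for z
    by (intro mult_mono component_le_norm_cart) auto
  then show "AE z in std_gauss. norm (grad h z $ k * grad h z $ l) \<le> norm ((norm (grad h z))\<^sup>2)"
    by (simp add: abs_mult power2_eq_square)
qed

lemma grad_info_compose_orthogonal:
  fixes h :: "real^'n::{finite,wellorder} \<Rightarrow> real"
    and U :: "real^'n::{finite,wellorder}^'n::{finite,wellorder}"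
  assumes U: "orthogonal_matrix U" and "AE z in lborel. h differentiable (at z)"
    and fin: "integrable std_gauss (\<lambda>z. (norm (grad h z))\<^sup>2)"
  shows "grad_info (\<lambda>x. h (U *v x)) = transpose U ** grad_info h ** U"
proof -
  have "AE z in lborel. h differentiable (at (U *v z))"
    using U assms(2) by (rule AE_lborel_orthogonal_matrix)
  then have grad_eq: "AE z in std_gauss. grad (\<lambda>x. h (U *v x)) z = transpose U *v grad h (U *v z)"
    by (intro AE_std_gauss_if_AE_lborel) (auto elim!: AE_mp intro: grad_compose_mv)
  have entry: "grad_info (\<lambda>x. h (U *v x)) $ i $ j = (transpose U ** grad_info h ** U) $ i $ j" for i j
  proof -
    define P where "P x = (transpose U *v x) $ i * (transpose U *v x) $ j" for x
    have P_expand: "P x = (\<Sum>k\<in>UNIV. \<Sum>l\<in>UNIV. U $ k $ i * U $ l $ j * (x $ k * x $ l))" for x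
      unfolding P_def matrix_vector_mult_def transpose_def by (simp add: sum_product algebra_simps)
    have "grad_info (\<lambda>x. h (U *v x)) $ i $ j
        = (\<integral>z. grad (\<lambda>x. h (U *v x)) z $ i * grad (\<lambda>x. h (U *v x)) z $ j \<partial>std_gauss)"
      by (simp add: grad_info_def)
    also have "\<dots> = (\<integral>z. P (grad h (U *v z)) \<partial>std_gauss)"
    proof (rule integral_cong_AE)
      show "(\<lambda>z. P (grad h (U *v z))) \<in> borel_measurable std_gauss"
        by (simp add: P_expand)
      show "AE z in std_gauss. grad (\<lambda>x. h (U *v x)) z $ i * grad (\<lambda>x. h (U *v x)) z $ j
          = P (grad h (U *v z))"
        using grad_eq by eventually_elim (simp add: P_def)
    qed measurable
    also have "\<dots> = (\<integral>z. P (grad h z) \<partial>std_gauss)"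
      by (rule integral_std_gauss_orthogonal_matrix[OF U]) (simp add: P_expand)
    also have "\<dots> = (\<Sum>k\<in>UNIV. \<Sum>l\<in>UNIV. U $ k $ i * U $ l $ j * grad_info h $ k $ l)"
      by (simp add: P_expand grad_info_def integrable_grad_component_mult[OF fin])
    also have "\<dots> = (transpose U ** grad_info h ** U) $ i $ j"
      by (subst sum.swap)
        (simp add: matrix_matrix_mult_def transpose_def sum_distrib_left sum_distrib_right mult_ac)
    finally show ?thesis .
  qed
  then show ?thesis
    by (simp add: vec_eq_iff)
qed

lemma eig_decomp_orthogonal_congruence:
  fixes V :: "real^'n::{finite,wellorder}^'n::{finite,wellorder}"
  assumes "orthogonal_matrix V" and "eig_decomp C Q Lam"
  shows "eig_decomp (transpose V ** C ** V) (transpose V ** Q) Lam"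
  using assms unfolding eig_decomp_def
  by (simp add: orthogonal_matrix_mul matrix_transpose_mul matrix_mul_assoc)

lemma active_subspace_mv_image:
  "(\<lambda>z. A *v z) ` active_subspace Q r = active_subspace (A ** Q) r"
proof -
  have "column i (A ** Q) = A *v column i Q" for i
    by (metis matrix_vector_mult_basis matrix_vector_mul_assoc)
  then have "(\<lambda>z. A *v z) ` {column i Q | i. card {k. k < i} < r}
      = {column i (A ** Q) | i. card {k. k < i} < r}"
    by auto
  then show ?thesis
    unfolding active_subspace_def by (simp add: span_linear_image[symmetric] matrix_vector_mul_linear)
qed

theorem theorem3p5:
  fixes g1 :: "real^'n::{finite,wellorder} \<Rightarrow> real"
    and U :: "real^'n::{finite,wellorder}^'n::{finite,wellorder}"
  assumes nonneg: "\<forall>z. g1 z \<ge> 0"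
    and ae_diff: "AE z in lborel. g1 differentiable (at z)"
    and orthU: "orthogonal_matrix U"
    and uniq1: "\<exists>!z. opt_drift_eq g1 z"
    and uniq2: "\<exists>!z. opt_drift_eq (\<lambda>z. g1 (U *v z)) z"
    and fin1: "integrable std_gauss (\<lambda>z. (norm (grad (gI g1) z))\<^sup>2)"
    and fin2: "integrable std_gauss (\<lambda>z. (norm (grad (gI (\<lambda>z. g1 (U *v z))) z))\<^sup>2)"
  shows "\<exists>V. orthogonal_matrix V
           \<and> (\<forall>z. gI (\<lambda>z. g1 (U *v z)) z = gI g1 (V *v z))
           \<and> (\<forall>Q1 Lam. eig_decomp (grad_info (gI g1)) Q1 Lam \<longrightarrow>
                 eig_decomp (grad_info (gI (\<lambda>z. g1 (U *v z)))) (transpose V ** Q1) Lam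
               \<and> (\<forall>r. (\<lambda>z. V *v z) ` active_subspace (transpose V ** Q1) r = active_subspace Q1 r)
               \<and> (\<forall>z. gIA g1 Q1 z = gIA (\<lambda>z. g1 (U *v z)) (transpose V ** Q1) z))"
proof -
  let ?g2 = "\<lambda>z. g1 (U *v z)"
  have gI2: "gI ?g2 = (\<lambda>z. gI g1 (U *v z))"
    using orthU uniq1 by (rule gI_compose_orthogonal)
  have C2: "grad_info (gI ?g2) = transpose U ** grad_info (gI g1) ** U"
    unfolding gI2 using orthU AE_differentiable_gI[OF ae_diff] fin1
    by (rule grad_info_compose_orthogonal)
  have U_cancel: "U ** (transpose U ** Q) = Q" for Q
    using orthU by (simp add: matrix_mul_assoc orthogonal_matrix_def)
  show ?thesis
  proof (intro exI[of _ U] conjI allI impI orthU)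
    fix z
    show "gI ?g2 z = gI g1 (U *v z)"
      by (simp add: gI2)
  next
    fix Q1 Lam
    assume "eig_decomp (grad_info (gI g1)) Q1 Lam"
    then show "eig_decomp (grad_info (gI ?g2)) (transpose U ** Q1) Lam"
      unfolding C2 using orthU by (simp add: eig_decomp_orthogonal_congruence)
  next
    fix Q1 r
    show "(\<lambda>z. U *v z) ` active_subspace (transpose U ** Q1) r = active_subspace Q1 r"
      by (simp add: active_subspace_mv_image U_cancel)
  next
    fix Q1 z
    show "gIA g1 Q1 z = gIA ?g2 (transpose U ** Q1) z"
      by (simp add: gIA_def gI2 matrix_vector_mul_assoc U_cancel)
  qed
qed

end
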